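(* For every $k\ge1$ for which $\beta_0,\dots,\beta_k$ are defined, the greatest common divisor of $\beta_0,\beta_1,\dots,\beta_k$ is $\frac{1}{Q_k}$.
   Context: Setting: $k$ (the field) is algebraically closed of characteristic $0$; $\nu^*$ is a $k$-valuation of a function field $K^*$ of transcendence degree $2$ whose value group is a subgroup of $\mathbb{Q}$ and whose residue field $V^*/m_{V^*}$ is $k$; $S$ is an algebraic two-dimensional regular local ring with quotient field $K^*$ dominated by $V^*$, with regular parameters $(x,y)$, and $\nu^*$ is normalized so that $\nu^*(x)=1$. Jumping polynomials: $T_0=x$, $T_1=y$, $q_0=\infty$, $p_1,q_1$ coprime positive integers with $\nu^*(y)=p_1/q_1$; for $i\ge1$, $n_{i,j}$ ($0\le j<i$) are nonnegative integers with $n_{i,j}<q_j$ and $q_i\nu^*(T_i)=\sum_{j<i}n_{i,j}\nu^*(T_j)$, $\lambda_i\in k$ is the residue of $T_i^{q_i}/\prod_{j<i}T_j^{n_{i,j}}$, $T_{i+1}=T_i^{q_i}-\lambda_i\prod_{j<i}T_j^{n_{i,j}}$, and $p_{i+1},q_{i+1}$ are coprime positive integers with $\nu^*(T_{i+1})=q_i\nu^*(T_i)+\frac{1}{q_1\cdots q_i}\frac{p_{i+1}}{q_{i+1}}$. Put $\beta_i=\nu^*(T_i)$ and $Q_i=q_1\cdots q_i$. For rationals, $b$ $\mathbb{Z}$-divides $a$ if $a\in b\mathbb{Z}$; the greatest common divisor of finitely many rationals is the greatest rational $g$ that $\mathbb{Z}$-divides all of them. *)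

theory Defs
  imports Complex_Main
begin

definition zdvd :: "rat \<Rightarrow> rat \<Rightarrow> bool" where
  "zdvd b a \<longleftrightarrow> (\<exists>m::int. a = of_int m * b)"

definition rat_gcd :: "rat set \<Rightarrow> rat" where
  "rat_gcd A = (GREATEST g. \<forall>a\<in>A. zdvd g a)"

text \<open>A rational-valued valuation nu on the nonzero elements of a field K, trivial on a
  subfield kf, whose residue field is kf (every element of nonnegative value has a residue
  in kf).  The value of nu at 0 is irrelevant (never used).\<close>
definition k_valuation :: "'K::field set \<Rightarrow> ('K \<Rightarrow> rat) \<Rightarrow> bool" where
  "k_valuation kf \<nu> \<longleftrightarrow>
     0 \<in> kf \<and> 1 \<in> kf \<and>
     (\<forall>a\<in>kf. \<forall>b\<in>kf. a + b \<in> kf \<and> a * b \<in> kf \<and> - a \<in> kf \<and> inverse a \<in> kf) \<and>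
     (\<forall>a b. a \<noteq> 0 \<longrightarrow> b \<noteq> 0 \<longrightarrow> \<nu> (a * b) = \<nu> a + \<nu> b) \<and>
     (\<forall>a b. a \<noteq> 0 \<longrightarrow> b \<noteq> 0 \<longrightarrow> a + b \<noteq> 0 \<longrightarrow> \<nu> (a + b) \<ge> min (\<nu> a) (\<nu> b)) \<and>
     (\<forall>c\<in>kf. c \<noteq> 0 \<longrightarrow> \<nu> c = 0) \<and>
     (\<forall>u. u \<noteq> 0 \<longrightarrow> \<nu> u \<ge> 0 \<longrightarrow> (\<exists>c\<in>kf. u - c = 0 \<or> \<nu> (u - c) > 0))"

definition has_residue :: "('K::field \<Rightarrow> rat) \<Rightarrow> 'K \<Rightarrow> 'K \<Rightarrow> bool" where
  "has_residue \<nu> u lam \<longleftrightarrow> (u - lam = 0 \<or> \<nu> (u - lam) > 0)"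

end

theory Submission imports Defs begin

text \<open>Only the recursion
  \<open>\<beta>\<^sub>0 = 1\<close>, \<open>\<beta>\<^sub>1 = p\<^sub>1/q\<^sub>1\<close>, \<open>\<beta>\<^sub>i\<^sub>+\<^sub>1 = q\<^sub>i \<beta>\<^sub>i + p\<^sub>i\<^sub>+\<^sub>1/Q\<^sub>i\<^sub>+\<^sub>1\<close>
  matters. By induction on \<open>m\<close>, \<open>1/Q\<^sub>m\<close> divides \<open>\<beta>\<^sub>0, \<dots>, \<beta>\<^sub>m\<close>, since
  \<open>1/Q\<^sub>m = q\<^sub>m\<^sub>+\<^sub>1 \<cdot> 1/Q\<^sub>m\<^sub>+\<^sub>1\<close>. Conversely every common divisor of
  \<open>\<beta>\<^sub>0, \<dots>, \<beta>\<^sub>m\<^sub>+\<^sub>1\<close> divides \<open>1/Q\<^sub>m\<close> and \<open>p\<^sub>m\<^sub>+\<^sub>1/Q\<^sub>m\<^sub>+\<^sub>1 = \<beta>\<^sub>m\<^sub>+\<^sub>1 - q\<^sub>m \<beta>\<^sub>m\<close>,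
  hence, by a Bezout relation \<open>u p\<^sub>m\<^sub>+\<^sub>1 + v q\<^sub>m\<^sub>+\<^sub>1 = 1\<close>, also
  \<open>1/Q\<^sub>m\<^sub>+\<^sub>1 = u \<cdot> p\<^sub>m\<^sub>+\<^sub>1/Q\<^sub>m\<^sub>+\<^sub>1 + v \<cdot> 1/Q\<^sub>m\<close>.\<close>

lemma zdvd_refl [simp]: "zdvd a a"
  unfolding zdvd_def by (rule exI[of _ 1]) simp

lemma zdvd_add: "zdvd h a \<Longrightarrow> zdvd h b \<Longrightarrow> zdvd h (a + b)"
  unfolding zdvd_def by (metis distrib_right of_int_add)

lemma zdvd_diff: "zdvd h a \<Longrightarrow> zdvd h b \<Longrightarrow> zdvd h (a - b)"
  unfolding zdvd_def by (metis left_diff_distrib of_int_diff)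

lemma zdvd_mult_int: "zdvd h a \<Longrightarrow> zdvd h (of_int z * a)"
  unfolding zdvd_def by (metis mult.assoc of_int_mult)

lemma zdvd_trans: "zdvd a b \<Longrightarrow> zdvd b c \<Longrightarrow> zdvd a c"
  unfolding zdvd_def by (metis mult.assoc of_int_mult)

lemma zdvd_imp_le:
  assumes "zdvd h g" and "0 < g"
  shows "h \<le> g"
proof (cases "h \<le> 0")
  case True
  with \<open>0 < g\<close> show ?thesis by linarith
next
  case False
  from \<open>zdvd h g\<close> obtain m :: int where m: "g = of_int m * h"
    unfolding zdvd_def by blast
  with \<open>0 < g\<close> False have "1 \<le> m"
    by (simp add: zero_less_mult_iff)
  with False have "1 * h \<le> of_int m * h"
    by (intro mult_right_mono) auto
  with m show ?thesis by simp
qed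

lemma rat_gcd_eqI:
  assumes "0 < g"
    and "\<And>a. a \<in> A \<Longrightarrow> zdvd g a"
    and "\<And>h. (\<And>a. a \<in> A \<Longrightarrow> zdvd h a) \<Longrightarrow> zdvd h g"
  shows "rat_gcd A = g"
  unfolding rat_gcd_def
  using assms by (intro Greatest_equality) (auto intro: zdvd_imp_le)

locale jumping_values =
  fixes \<beta> :: "nat \<Rightarrow> rat" and p q :: "nat \<Rightarrow> nat" and k :: nat
  assumes \<beta>_0: "\<beta> 0 = 1"
    and \<beta>_1: "\<beta> 1 = of_nat (p 1) / of_nat (q 1)"
    and pq: "\<And>i. 1 \<le> i \<Longrightarrow> i \<le> k \<Longrightarrow> 0 < p i \<and> 0 < q i \<and> coprime (p i) (q i)"
    and \<beta>_Suc: "\<And>i. 1 \<le> i \<Longrightarrow> i < k \<Longrightarrow> \<beta> (Suc i) = of_nat (q i) * \<beta> i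
           + (1 / of_nat (\<Prod>j\<in>{1..i}. q j)) * (of_nat (p (Suc i)) / of_nat (q (Suc i)))"
begin

definition Q :: "nat \<Rightarrow> rat" where
  "Q m = of_nat (\<Prod>j\<in>{1..m}. q j)"

lemma Q_Suc: "Q (Suc m) = Q m * of_nat (q (Suc m))"
  unfolding Q_def by (simp add: atLeastAtMostSuc_conv mult.commute)

lemma Q_pos: "m \<le> k \<Longrightarrow> 0 < Q m"
  unfolding Q_def of_nat_0_less_iff using pq by (intro prod_pos) auto

lemma inv_Q_Suc_zdvd_inv_Q: "m < k \<Longrightarrow> zdvd (1 / Q (Suc m)) (1 / Q m)"
  using pq[of "Suc m"] unfolding zdvd_def by (intro exI[of _ "int (q (Suc m))"]) (simp add: Q_Suc)

text \<open>For \<open>m = 0\<close> the coefficient \<open>c\<close> is \<open>0\<close>: there is no term \<open>q\<^sub>0 \<beta>\<^sub>0\<close>, as \<open>q\<^sub>0 = \<infinity>\<close>.\<close>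

lemma \<beta>_Suc_decomp:
  assumes "m < k"
  obtains c :: int where "\<beta> (Suc m) = of_int c * \<beta> m + of_int (p (Suc m)) * (1 / Q (Suc m))"
proof (cases "m = 0")
  case True
  then show ?thesis using \<beta>_1 by (intro that[of 0]) (simp add: Q_def)
next
  case False
  then show ?thesis using \<beta>_Suc[of m] assms
    by (intro that[of "int (q m)"]) (simp add: Q_def atLeastAtMostSuc_conv mult.commute)
qed

lemma inv_Q_zdvd_\<beta>: "m \<le> k \<Longrightarrow> i \<le> m \<Longrightarrow> zdvd (1 / Q m) (\<beta> i)"
proof (induction m arbitrary: i)
  case 0
  then show ?case using \<beta>_0 by (simp add: Q_def)
next
  case (Suc m)
  have zdvd_\<beta>: "zdvd (1 / Q (Suc m)) (\<beta> i)" if "i \<le> m" for i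
    using Suc that inv_Q_Suc_zdvd_inv_Q[of m] by (auto intro: zdvd_trans)
  moreover have "zdvd (1 / Q (Suc m)) (\<beta> (Suc m))"
  proof -
    from Suc.prems have "m < k" by simp
    then obtain c :: int where "\<beta> (Suc m) = of_int c * \<beta> m + of_int (p (Suc m)) * (1 / Q (Suc m))"
      by (rule \<beta>_Suc_decomp)
    also have "zdvd (1 / Q (Suc m)) \<dots>"
      using zdvd_\<beta>[of m] by (intro zdvd_add zdvd_mult_int zdvd_refl) simp
    finally show ?thesis .
  qed
  ultimately show ?case using Suc.prems le_Suc_eq by blast
qed

lemma common_zdvd_inv_Q: "m \<le> k \<Longrightarrow> (\<And>i. i \<le> m \<Longrightarrow> zdvd h (\<beta> i)) \<Longrightarrow> zdvd h (1 / Q m)"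
proof (induction m)
  case 0
  then show ?case using \<beta>_0 by (simp add: Q_def)
next
  case (Suc m)
  then have zdvd_inv_Q: "zdvd h (1 / Q m)" by simp
  from Suc.prems have "m < k" by simp
  then obtain c :: int where "\<beta> (Suc m) = of_int c * \<beta> m + of_int (p (Suc m)) * (1 / Q (Suc m))"
    by (rule \<beta>_Suc_decomp)
  then have "of_int (p (Suc m)) * (1 / Q (Suc m)) = \<beta> (Suc m) - of_int c * \<beta> m"
    by simp
  also have "zdvd h \<dots>"
    using Suc.prems by (intro zdvd_diff zdvd_mult_int) simp_all
  finally have zdvd_jump: "zdvd h (of_int (p (Suc m)) * (1 / Q (Suc m)))" .
  have "coprime (int (p (Suc m))) (int (q (Suc m)))"
    using pq[of "Suc m"] Suc.prems by simp
  then obtain u v :: int where uv: "u * int (p (Suc m)) + v * int (q (Suc m)) = 1"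
    by (metis bezout_int coprime_iff_gcd_eq_1)
  have "1 / Q (Suc m) = of_int u * (of_int (p (Suc m)) * (1 / Q (Suc m))) + of_int v * (1 / Q m)"
  proof -
    have "of_int u * of_int (p (Suc m)) + of_int v * of_nat (q (Suc m)) = (1 :: rat)"
      using arg_cong[OF uv, of rat_of_int] by simp
    with Q_Suc[of m] Suc.prems Q_pos[of m] pq[of "Suc m"] show ?thesis
      by (simp add: field_simps)
  qed
  also have "zdvd h \<dots>"
    by (rule zdvd_add[OF zdvd_mult_int[OF zdvd_jump] zdvd_mult_int[OF zdvd_inv_Q]])
  finally show ?case .
qed

theorem rat_gcd_\<beta>: "rat_gcd (\<beta> ` {0..k}) = 1 / Q k"
  using Q_pos[of k] inv_Q_zdvd_\<beta>[of k] common_zdvd_inv_Q[of k]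
  by (intro rat_gcd_eqI) auto

end

theorem proposition5p3:
  fixes \<nu> :: "'K::field \<Rightarrow> rat" and kf :: "'K set" and x y :: 'K
    and T :: "nat \<Rightarrow> 'K" and p q :: "nat \<Rightarrow> nat" and n :: "nat \<Rightarrow> nat \<Rightarrow> nat"
    and lam :: "nat \<Rightarrow> 'K" and k :: nat
  assumes val: "k_valuation kf \<nu>"
    and x_nz: "x \<noteq> 0" and y_nz: "y \<noteq> 0"
    and nu_x: "\<nu> x = 1"
    and k1: "k \<ge> 1"
    and T0: "T 0 = x" and T1: "T 1 = y"
    and T_nz: "\<forall>i\<le>k. T i \<noteq> 0"
    and pq: "\<forall>i. 1 \<le> i \<and> i \<le> k \<longrightarrow> 0 < p i \<and> 0 < q i \<and> coprime (p i) (q i)"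
    and nu_y: "\<nu> y = of_nat (p 1) / of_nat (q 1)"
    and step: "\<forall>i. 1 \<le> i \<and> i < k \<longrightarrow>
        (\<forall>j. 1 \<le> j \<and> j < i \<longrightarrow> n i j < q j) \<and>
        of_nat (q i) * \<nu> (T i) = (\<Sum>j<i. of_nat (n i j) * \<nu> (T j)) \<and>
        lam i \<in> kf \<and>
        has_residue \<nu> (T i ^ q i / (\<Prod>j<i. T j ^ n i j)) (lam i) \<and>
        T (Suc i) = T i ^ q i - lam i * (\<Prod>j<i. T j ^ n i j) \<and>
        \<nu> (T (Suc i)) = of_nat (q i) * \<nu> (T i)
           + (1 / of_nat (\<Prod>j\<in>{1..i}. q j)) * (of_nat (p (Suc i)) / of_nat (q (Suc i)))"
  shows "rat_gcd ((\<lambda>i. \<nu> (T i)) ` {0..k}) = 1 / of_nat (\<Prod>j\<in>{1..k}. q j)"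
proof -
  interpret jumping_values "\<lambda>i. \<nu> (T i)" p q k
    using T0 nu_x T1 nu_y pq step by unfold_locales auto
  show ?thesis using rat_gcd_\<beta> by (simp add: Q_def)
qed

end
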